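(* Let $(G,\mathbf p)$ be a framework with $\mathbf p$ pinned with $\ell$-dimensional affine span, and let $E$ be an energy that is bar-like at $\mathbf p$, regarded as a function on $\ell$-pinned configuration space. Then $\mathbf p$ is a local minimum of $E$. Moreover, $(G,\mathbf p)$ is rigid (in the pinned sense below) if and only if $\mathbf p$ is a strict local minimum of $E$.
   Context: Fix a dimension $d$. A configuration is $\mathbf p=(\mathbf p_1,\dots,\mathbf p_n)$, $\mathbf p_i\in\mathbb R^d$; a framework $(G,\mathbf p)$ consists of a graph $G$ on $\{1,\dots,n\}$ and a configuration. A configuration $\mathbf q$ is in $\ell$-pinned position if $\mathbf q_1=0$ and, for $2\le i\le\ell+1$, $\mathbf q_i\in\mathrm{span}(e_1,\dots,e_{i-1})$; these form the $\ell$-pinned configuration space. If $\mathbf p$ has $\ell$-dimensional affine span, it is pinned if $\mathbf p_1,\dots,\mathbf p_{\ell+1}$ are affinely independent and $\mathbf p$ is in $\ell$-pinned position. $(G,\mathbf p)$ is (pinned) rigid if there is a neighborhood $U$ of $\mathbf p$ such that every $\ell$-pinned $\mathbf q\in U$ with $|\mathbf q_i-\mathbf q_j|=|\mathbf p_i-\mathbf p_j|$ for all edges $ij$ equals $\mathbf p$. An edge-based energy is $E(\mathbf q)=\sum_{ij\in E(G)}E_{ij}(|\mathbf q_i-\mathbf q_j|)$ for $\ell$-pinned $\mathbf q$, with $E_{ij}:\mathbb R\to\mathbb R$. It is bar-like at $\mathbf p$ if for each edge $ij$, $d_{ij}=|\mathbf p_i-\mathbf p_j|\ne0$, $E_{ij}$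 is analytic at $d_{ij}$, and $E_{ij}$ has a strict local minimum at $d_{ij}$. *)

theory Defs
  imports "HOL-Analysis.Analysis"
begin

text \<open>Points of R^d are vectors of type real^'d; the coordinate order needed for
  e_1, ..., e_d is given by the enumeration of the finite index type 'd.
  Vertices are 1..n; a configuration is a map nat => real^'d (only values on 1..n matter).\<close>

definition std_basis :: "nat \<Rightarrow> real^'d::enum" where
  "std_basis j = axis (Enum.enum ! (j - 1)) 1"

definition is_graph :: "nat \<Rightarrow> (nat \<times> nat) set \<Rightarrow> bool" where
  "is_graph n G \<longleftrightarrow> G \<subseteq> {(i,j). 1 \<le> i \<and> i < j \<and> j \<le> n}"

definition pinned_position :: "nat \<Rightarrow> (nat \<Rightarrow> real^'d::enum) \<Rightarrow> bool" where
  "pinned_position l q \<longleftrightarrow> q 1 = 0 \<and>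
     (\<forall>i\<in>{2..l+1}. q i \<in> span (std_basis ` {1..i-1}))"

definition pinned :: "nat \<Rightarrow> nat \<Rightarrow> (nat \<Rightarrow> real^'d::enum) \<Rightarrow> bool" where
  "pinned n l p \<longleftrightarrow> aff_dim (p ` {1..n}) = int l \<and> l + 1 \<le> n \<and>
     inj_on p {1..l+1} \<and> \<not> affine_dependent (p ` {1..l+1}) \<and> pinned_position l p"

definition conf_near :: "nat \<Rightarrow> real \<Rightarrow> (nat \<Rightarrow> real^'d) \<Rightarrow> (nat \<Rightarrow> real^'d) \<Rightarrow> bool" where
  "conf_near n eps p q \<longleftrightarrow> (\<forall>i\<in>{1..n}. dist (q i) (p i) < eps)"

definition conf_eq :: "nat \<Rightarrow> (nat \<Rightarrow> real^'d) \<Rightarrow> (nat \<Rightarrow> real^'d) \<Rightarrow> bool" where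
  "conf_eq n p q \<longleftrightarrow> (\<forall>i\<in>{1..n}. q i = p i)"

definition pinned_rigid :: "nat \<Rightarrow> nat \<Rightarrow> (nat \<times> nat) set \<Rightarrow> (nat \<Rightarrow> real^'d::enum) \<Rightarrow> bool" where
  "pinned_rigid n l G p \<longleftrightarrow> (\<exists>eps>0. \<forall>q. pinned_position l q \<and> conf_near n eps p q \<and>
       (\<forall>(i,j)\<in>G. dist (q i) (q j) = dist (p i) (p j)) \<longrightarrow> conf_eq n p q)"

definition energy :: "(nat \<times> nat) set \<Rightarrow> (nat \<Rightarrow> nat \<Rightarrow> real \<Rightarrow> real) \<Rightarrow> (nat \<Rightarrow> real^'d) \<Rightarrow> real" where
  "energy G Ef q = (\<Sum>(i,j)\<in>G. Ef i j (dist (q i) (q j)))"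

definition real_analytic_at :: "(real \<Rightarrow> real) \<Rightarrow> real \<Rightarrow> bool" where
  "real_analytic_at f a \<longleftrightarrow> (\<exists>r>0. \<exists>c::nat \<Rightarrow> real. \<forall>x. \<bar>x - a\<bar> < r \<longrightarrow>
       (\<lambda>k. c k * (x - a) ^ k) sums f x)"

definition strict_local_min_at :: "(real \<Rightarrow> real) \<Rightarrow> real \<Rightarrow> bool" where
  "strict_local_min_at f a \<longleftrightarrow> (\<exists>r>0. \<forall>x. x \<noteq> a \<and> \<bar>x - a\<bar> < r \<longrightarrow> f a < f x)"

definition bar_like :: "(nat \<times> nat) set \<Rightarrow> (nat \<Rightarrow> nat \<Rightarrow> real \<Rightarrow> real) \<Rightarrow> (nat \<Rightarrow> real^'d) \<Rightarrow> bool" where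
  "bar_like G Ef p \<longleftrightarrow> (\<forall>(i,j)\<in>G. dist (p i) (p j) \<noteq> 0 \<and>
       real_analytic_at (Ef i j) (dist (p i) (p j)) \<and>
       strict_local_min_at (Ef i j) (dist (p i) (p j)))"

definition pinned_local_min :: "nat \<Rightarrow> nat \<Rightarrow> ((nat \<Rightarrow> real^'d::enum) \<Rightarrow> real) \<Rightarrow> (nat \<Rightarrow> real^'d::enum) \<Rightarrow> bool" where
  "pinned_local_min n l F p \<longleftrightarrow> (\<exists>eps>0. \<forall>q. pinned_position l q \<and> conf_near n eps p q \<longrightarrow> F p \<le> F q)"

definition pinned_strict_local_min :: "nat \<Rightarrow> nat \<Rightarrow> ((nat \<Rightarrow> real^'d::enum) \<Rightarrow> real) \<Rightarrow> (nat \<Rightarrow> real^'d::enum) \<Rightarrow> bool" where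
  "pinned_strict_local_min n l F p \<longleftrightarrow> (\<exists>eps>0. \<forall>q. pinned_position l q \<and> conf_near n eps p q \<and>
       \<not> conf_eq n p q \<longrightarrow> F p < F q)"

end

theory Submission
  imports Defs
begin

text \<open>Near \<open>p\<close> every edge length lies within the radius on which \<open>E\<^sub>i\<^sub>j\<close> has its strict
  minimum at the length in \<open>p\<close>, so each term of the energy is minimised at \<open>p\<close>, strictly
  unless the edge changes length. Hence \<open>E q \<ge> E p\<close> near \<open>p\<close>, with equality exactly when \<open>q\<close>
  preserves all edge lengths, and rigidity (no such nearby \<open>q \<noteq> p\<close>) is the same as strictness
  of the minimum.\<close>

lemma finite_graph: "is_graph n G \<Longrightarrow> finite G"
  unfolding is_graph_def by (rule finite_subset[of _ "{1..n} \<times> {1..n}"]) auto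

lemma abs_dist_diff_less_double:
  fixes x x' y y' :: "'a::metric_space"
  assumes "dist x' x < r" and "dist y' y < r"
  shows "\<bar>dist x' y' - dist x y\<bar> < 2 * r"
proof -
  have "dist x' y' \<le> dist x' x + dist x y + dist y' y"
    using dist_triangle[of x' y' x] dist_triangle[of x y' y] by (simp add: dist_commute)
  moreover have "dist x y \<le> dist x' x + dist x' y' + dist y' y"
    using dist_triangle[of x y x'] dist_triangle[of x' y y'] by (simp add: dist_commute)
  ultimately show ?thesis
    using assms by linarith
qed

lemma conf_near_mono: "r \<le> r' \<Longrightarrow> conf_near n r p q \<Longrightarrow> conf_near n r' p q"
  unfolding conf_near_def by fastforce

lemma strict_local_min_at_eventually:
  assumes "strict_local_min_at f a"
  shows "\<forall>\<^sub>F r in at_right 0. \<forall>x. x \<noteq> a \<and> \<bar>x - a\<bar> < r \<longrightarrow> f a < f x"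
proof -
  obtain r0 where "r0 > 0" and min: "\<And>x. x \<noteq> a \<Longrightarrow> \<bar>x - a\<bar> < r0 \<Longrightarrow> f a < f x"
    using assms unfolding strict_local_min_at_def by blast
  then show ?thesis
    unfolding eventually_at_right_field by (intro exI[of _ r0]) auto
qed

lemma bar_like_edges_strict_min_near:
  assumes "is_graph n G" and "bar_like G Ef p"
  obtains r where "r > 0" and "\<And>q i j. conf_near n r p q \<Longrightarrow> (i, j) \<in> G \<Longrightarrow>
      dist (q i) (q j) \<noteq> dist (p i) (p j) \<Longrightarrow>
      Ef i j (dist (p i) (p j)) < Ef i j (dist (q i) (q j))"
proof -
  have edge_min: "\<forall>\<^sub>F r in at_right 0. \<forall>x. x \<noteq> dist (p i) (p j) \<and>
      \<bar>x - dist (p i) (p j)\<bar> < r \<longrightarrow> Ef i j (dist (p i) (p j)) < Ef i j x"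
    if "(i, j) \<in> G" for i j
    using assms(2) that unfolding bar_like_def by (intro strict_local_min_at_eventually) auto
  have "\<forall>\<^sub>F r in at_right 0. \<forall>(i, j)\<in>G. \<forall>x. x \<noteq> dist (p i) (p j) \<and>
      \<bar>x - dist (p i) (p j)\<bar> < r \<longrightarrow> Ef i j (dist (p i) (p j)) < Ef i j x"
    by (rule eventually_ball_finite[OF finite_graph[OF assms(1)]]) (auto intro: edge_min)
  then have "\<forall>\<^sub>F r in at_right 0. r > 0 \<and> (\<forall>(i, j)\<in>G. \<forall>x. x \<noteq> dist (p i) (p j) \<and>
      \<bar>x - dist (p i) (p j)\<bar> < r \<longrightarrow> Ef i j (dist (p i) (p j)) < Ef i j x)"
    by (intro eventually_conj eventually_at_right_less)
  then obtain r where "r > 0" and min: "\<forall>(i, j)\<in>G. \<forall>x. x \<noteq> dist (p i) (p j) \<and>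
      \<bar>x - dist (p i) (p j)\<bar> < r \<longrightarrow> Ef i j (dist (p i) (p j)) < Ef i j x"
    using eventually_happens'[OF trivial_limit_at_right_real] by blast
  show thesis
  proof (rule that[of "r / 2"])
    show "r / 2 > 0" using \<open>r > 0\<close> by simp
    fix q i j assume near: "conf_near n (r / 2) p q" and ij: "(i, j) \<in> G"
      and changed: "dist (q i) (q j) \<noteq> dist (p i) (p j)"
    have "i \<in> {1..n}" "j \<in> {1..n}"
      using ij \<open>is_graph n G\<close> unfolding is_graph_def by auto
    then have "\<bar>dist (q i) (q j) - dist (p i) (p j)\<bar> < 2 * (r / 2)"
      using near unfolding conf_near_def by (intro abs_dist_diff_less_double) auto
    then show "Ef i j (dist (p i) (p j)) < Ef i j (dist (q i) (q j))"
      using min ij changed by auto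
  qed
qed

lemma energy_le_if_edges_strict_min:
  assumes "\<And>i j. (i, j) \<in> G \<Longrightarrow> dist (q i) (q j) \<noteq> dist (p i) (p j) \<Longrightarrow>
      Ef i j (dist (p i) (p j)) < Ef i j (dist (q i) (q j))"
  shows "energy G Ef p \<le> energy G Ef q"
  unfolding energy_def using assms by (intro sum_mono) (fastforce simp: le_less)

lemma energy_less_if_edges_strict_min:
  assumes "finite G"
    and "\<And>i j. (i, j) \<in> G \<Longrightarrow> dist (q i) (q j) \<noteq> dist (p i) (p j) \<Longrightarrow>
      Ef i j (dist (p i) (p j)) < Ef i j (dist (q i) (q j))"
    and "(i, j) \<in> G" and "dist (q i) (q j) \<noteq> dist (p i) (p j)"
  shows "energy G Ef p < energy G Ef q"
  unfolding energy_def using assms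
  by (intro sum_strict_mono_ex1 ballI bexI[of _ "(i, j)"]) (fastforce simp: le_less)+

lemma energy_eq_if_edge_lengths_eq:
  "\<forall>(i, j)\<in>G. dist (q i) (q j) = dist (p i) (p j) \<Longrightarrow> energy G Ef q = energy G Ef p"
  unfolding energy_def by (rule sum.cong) auto

lemma pinned_local_min_energy_if_edges_strict_min:
  assumes "r > 0" and edge_min: "\<And>q i j. conf_near n r p q \<Longrightarrow> (i, j) \<in> G \<Longrightarrow>
      dist (q i) (q j) \<noteq> dist (p i) (p j) \<Longrightarrow>
      Ef i j (dist (p i) (p j)) < Ef i j (dist (q i) (q j))"
  shows "pinned_local_min n l (energy G Ef) p"
  unfolding pinned_local_min_def
  using \<open>r > 0\<close> edge_min energy_le_if_edges_strict_min by metis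

lemma pinned_rigid_imp_strict_local_min_energy:
  assumes "finite G" and "r > 0" and edge_min: "\<And>q i j. conf_near n r p q \<Longrightarrow> (i, j) \<in> G \<Longrightarrow>
      dist (q i) (q j) \<noteq> dist (p i) (p j) \<Longrightarrow>
      Ef i j (dist (p i) (p j)) < Ef i j (dist (q i) (q j))"
    and "pinned_rigid n l G p"
  shows "pinned_strict_local_min n l (energy G Ef) p"
proof -
  obtain r' where "r' > 0" and rigid: "\<And>q. pinned_position l q \<Longrightarrow> conf_near n r' p q \<Longrightarrow>
      \<forall>(i, j)\<in>G. dist (q i) (q j) = dist (p i) (p j) \<Longrightarrow> conf_eq n p q"
    using \<open>pinned_rigid n l G p\<close> unfolding pinned_rigid_def by meson
  have "energy G Ef p < energy G Ef q"
    if q: "pinned_position l q" "conf_near n (min r r') p q" "\<not> conf_eq n p q" for q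
  proof -
    have "conf_near n r p q" "conf_near n r' p q"
      using conf_near_mono[OF _ q(2)] by auto
    moreover from this(2) obtain i j where "(i, j) \<in> G" "dist (q i) (q j) \<noteq> dist (p i) (p j)"
      using rigid q by blast
    ultimately show ?thesis
      using energy_less_if_edges_strict_min[OF \<open>finite G\<close>] edge_min by blast
  qed
  then show ?thesis
    unfolding pinned_strict_local_min_def using \<open>r > 0\<close> \<open>r' > 0\<close>
    by (intro exI[of _ "min r r'"]) auto
qed

lemma pinned_strict_local_min_energy_imp_rigid:
  assumes "pinned_strict_local_min n l (energy G Ef) p"
  shows "pinned_rigid n l G p"
proof -
  obtain r where "r > 0" and min: "\<And>q. pinned_position l q \<Longrightarrow> conf_near n r p q \<Longrightarrow>
      \<not> conf_eq n p q \<Longrightarrow> energy G Ef p < energy G Ef q"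
    using assms unfolding pinned_strict_local_min_def by meson
  have "conf_eq n p q" if "pinned_position l q" "conf_near n r p q"
    and "\<forall>(i, j)\<in>G. dist (q i) (q j) = dist (p i) (p j)" for q
    using min[OF that(1,2)] energy_eq_if_edge_lengths_eq[OF that(3)] by fastforce
  then show ?thesis
    unfolding pinned_rigid_def using \<open>r > 0\<close> by blast
qed

theorem theorem3p3:
  fixes p :: "nat \<Rightarrow> real^'d::enum"
    and G :: "(nat \<times> nat) set"
    and Ef :: "nat \<Rightarrow> nat \<Rightarrow> real \<Rightarrow> real"
    and n l :: nat
  assumes "is_graph n G"
    and "pinned n l p"
    and "bar_like G Ef p"
  shows "pinned_local_min n l (energy G Ef) p \<and>
         (pinned_rigid n l G p \<longleftrightarrow> pinned_strict_local_min n l (energy G Ef) p)"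
proof -
  obtain r where "r > 0" and edge_min: "\<And>q i j. conf_near n r p q \<Longrightarrow> (i, j) \<in> G \<Longrightarrow>
      dist (q i) (q j) \<noteq> dist (p i) (p j) \<Longrightarrow>
      Ef i j (dist (p i) (p j)) < Ef i j (dist (q i) (q j))"
    using bar_like_edges_strict_min_near[OF assms(1,3)] by blast
  have "pinned_local_min n l (energy G Ef) p"
    using \<open>r > 0\<close> edge_min by (rule pinned_local_min_energy_if_edges_strict_min)
  moreover have "pinned_strict_local_min n l (energy G Ef) p" if "pinned_rigid n l G p"
    using finite_graph[OF assms(1)] \<open>r > 0\<close> edge_min that
    by (rule pinned_rigid_imp_strict_local_min_energy)
  ultimately show ?thesis
    using pinned_strict_local_min_energy_imp_rigid by blast
qed

end
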